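(* Under the hypotheses and notation of the Barron estimate (with $v$ of infinite support, $a_n,h_n\in(0,1)$, $a_n\to0$, $h_n\to0$, and $\frac{1}{a_nh_n}=o(n^\tau)$ for some $\tau\in(0,1/2)$), define the oracle measure $\tilde\mu_n$ by $f_{\tilde\mu_n}(x)=f_v(x)\big[(1-a_n)\frac{\mu(A_n(x))}{v(A_n(x))}+a_n\big]$. Then $$\lim_{n\to\infty}\sup_{x\in A_v}\Big|\frac{f_{\tilde\mu_n}(x)}{f_{\mu^*_n}(x)}-1\Big|=0,\qquad\mathbb{P}_\mu\text{-a.s.}$$
   Context: $\mathbb{X}$ is a countably infinite set; for a probability $\mu$ on $\mathbb{X}$, $f_\mu(x)=\mu(\{x\})$ and $A_\mu=\{x:f_\mu(x)>0\}$. $v$ is a probability on $\mathbb{X}$ with infinite support and $\mu\ll v$. For each $n$, $\pi_n$ is a finite partition of $\mathbb{X}$ into cells each of $v$-measure $\ge h_n$, of maximal cardinality among such partitions; $A_n(x)$ is the cell of $\pi_n$ containing $x$. Given i.i.d. $X_1,X_2,\dots\sim\mu$ with law $\mathbb{P}_\mu$ and empirical measure $\hat\mu_n(A)=\frac1n\sum_{k\le n}\mathbb{1}_A(X_k)$, the Barron estimate is $f_{\mu^*_n}(x)=f_v(x)\big[(1-a_n)\frac{\hat\mu_n(A_n(x))}{v(A_n(x))}+a_n\big]$. *)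

theory Defs
  imports "HOL-Probability.Probability" "HOL-Library.Landau_Symbols"
begin

definition v_partition :: "'a pmf \<Rightarrow> real \<Rightarrow> 'a set set \<Rightarrow> bool" where
  "v_partition v h P \<longleftrightarrow> finite P \<and> (\<forall>A\<in>P. A \<noteq> {}) \<and> disjoint P \<and> \<Union>P = UNIV
     \<and> (\<forall>A\<in>P. measure_pmf.prob v A \<ge> h)"

definition max_v_partition :: "'a pmf \<Rightarrow> real \<Rightarrow> 'a set set \<Rightarrow> bool" where
  "max_v_partition v h P \<longleftrightarrow> v_partition v h P \<and> (\<forall>Q. v_partition v h Q \<longrightarrow> card Q \<le> card P)"

definition cell :: "'a set set \<Rightarrow> 'a \<Rightarrow> 'a set" where
  "cell P x = (THE A. A \<in> P \<and> x \<in> A)"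

text \<open>Empirical measure of A from the first n observations X_1..X_n = snth 0..n-1.\<close>
definition emp_measure :: "nat \<Rightarrow> 'a stream \<Rightarrow> 'a set \<Rightarrow> real" where
  "emp_measure n \<omega> A = (1 / real n) * (\<Sum>k<n. indicator A (\<omega> !! k))"

definition barron_dens :: "'a pmf \<Rightarrow> real \<Rightarrow> 'a set set \<Rightarrow> nat \<Rightarrow> 'a stream \<Rightarrow> 'a \<Rightarrow> real" where
  "barron_dens v a P n \<omega> x = pmf v x *
     ((1 - a) * emp_measure n \<omega> (cell P x) / measure_pmf.prob v (cell P x) + a)"

definition oracle_dens :: "'a pmf \<Rightarrow> 'a pmf \<Rightarrow> real \<Rightarrow> 'a set set \<Rightarrow> 'a \<Rightarrow> real" where
  "oracle_dens v \<mu> a P x = pmf v x *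
     ((1 - a) * measure_pmf.prob \<mu> (cell P x) / measure_pmf.prob v (cell P x) + a)"

end

theory Submission
  imports Defs "HOL-Real_Asymp.Real_Asymp"
begin

text \<open>
  Writing \<open>\<mu>\<^sub>n\<close> for the empirical measure, the ratio differs from 1 by at most
  \<open>|\<mu>\<^sub>n(A) - \<mu>(A)| / (a\<^sub>n h\<^sub>n)\<close> on the cell \<open>A\<close> of \<open>x\<close>, since the Barron
  denominator is at least \<open>a\<^sub>n\<close> and every cell has \<open>v\<close>-mass at least \<open>h\<^sub>n\<close>.
  By Hoeffding's inequality a fixed cell violates \<open>|\<mu>\<^sub>n(A) - \<mu>(A)| < \<epsilon> a\<^sub>n h\<^sub>n\<close>
  with probability at most \<open>2 exp (-2 n \<epsilon>\<^sup>2 a\<^sub>n\<^sup>2 h\<^sub>n\<^sup>2)\<close>; there are at most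
  \<open>1/h\<^sub>n\<close> cells, and \<open>a\<^sub>n h\<^sub>n \<ge> n\<^sup>-\<^sup>\<tau>\<close> with \<open>\<tau> < 1/2\<close> makes the union bound
  summable. Borel--Cantelli then yields the uniform bound for all large \<open>n\<close>, almost surely.
\<close>

lemma v_partition_cell:
  assumes "v_partition v h P"
  shows "cell P x \<in> P" and "x \<in> cell P x"
proof -
  from assms have U: "\<Union>P = UNIV" and D: "disjoint P" by (auto simp: v_partition_def)
  obtain A where A: "A \<in> P" "x \<in> A" using U by blast
  have "\<exists>!A. A \<in> P \<and> x \<in> A"
  proof (rule ex1I[of _ A])
    show "A \<in> P \<and> x \<in> A" using A by blast
    fix B assume "B \<in> P \<and> x \<in> B"
    with A D show "B = A" unfolding disjoint_def by blast
  qed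
  then have "cell P x \<in> P \<and> x \<in> cell P x" unfolding cell_def by (rule theI')
  then show "cell P x \<in> P" and "x \<in> cell P x" by simp_all
qed

lemma v_partition_card_le:
  assumes "v_partition v h P"
  shows "real (card P) * h \<le> 1"
proof -
  from assms have fin: "finite P" and D: "disjoint P"
    and H: "\<forall>A\<in>P. measure_pmf.prob v A \<ge> h" by (auto simp: v_partition_def)
  have "real (card P) * h = (\<Sum>A\<in>P. h)" by simp
  also have "\<dots> \<le> (\<Sum>A\<in>P. measure_pmf.prob v A)" using H by (intro sum_mono) auto
  also have "\<dots> = measure_pmf.prob v (\<Union>A\<in>P. A)"
    by (rule measure_pmf.finite_measure_finite_Union[symmetric])
       (use fin D in \<open>auto simp: disjoint_family_on_def disjoint_def\<close>)
  also have "\<dots> \<le> 1" by simp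
  finally show ?thesis .
qed

lemma mixture_ratio_deviation:
  fixes a h V M E :: real
  assumes a: "0 < a" "a < 1" and h: "0 < h" "h \<le> V" and E: "0 \<le> E"
  shows "\<bar>((1 - a) * M / V + a) / ((1 - a) * E / V + a) - 1\<bar> \<le> \<bar>M - E\<bar> / (a * h)"
proof -
  define D where "D = (1 - a) * E / V + a"
  have D: "a \<le> D" using a h E by (simp add: D_def)
  have "((1 - a) * M / V + a) / D - 1 = (((1 - a) * M / V + a) - D) / D"
    using D a by (simp add: diff_divide_distrib)
  also have "((1 - a) * M / V + a) - D = (1 - a) * (M - E) / V"
    by (simp add: D_def diff_divide_distrib right_diff_distrib)
  finally have "((1 - a) * M / V + a) / D - 1 = (1 - a) * (M - E) / V / D" by simp
  then have "\<bar>((1 - a) * M / V + a) / D - 1\<bar> = (1 - a) * \<bar>M - E\<bar> / V / D"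
    using a h D by (simp add: abs_mult abs_divide)
  also have "\<dots> \<le> \<bar>M - E\<bar> / V / D"
    using a h D by (intro divide_right_mono) (auto intro: mult_left_le_one_le)
  also have "\<dots> \<le> \<bar>M - E\<bar> / h / a"
    using a h D by (intro frac_le divide_nonneg_nonneg) auto
  finally show ?thesis by (simp add: D_def mult.commute)
qed

lemma emp_measure_nonneg: "0 \<le> emp_measure n \<omega> A"
  unfolding emp_measure_def by (intro mult_nonneg_nonneg sum_nonneg) auto

lemma oracle_barron_ratio_deviation:
  assumes P: "v_partition v h P" and h: "0 < h" and a: "0 < a" "a < 1"
    and x: "x \<in> set_pmf v"
  shows "\<bar>oracle_dens v \<mu> a P x / barron_dens v a P n \<omega> x - 1\<bar>
           \<le> \<bar>measure_pmf.prob \<mu> (cell P x) - emp_measure n \<omega> (cell P x)\<bar> / (a * h)"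
proof -
  define V where "V = measure_pmf.prob v (cell P x)"
  have "pmf v x > 0" using x by (simp add: set_pmf_eq)
  then have "oracle_dens v \<mu> a P x / barron_dens v a P n \<omega> x
      = ((1 - a) * measure_pmf.prob \<mu> (cell P x) / V + a) / ((1 - a) * emp_measure n \<omega> (cell P x) / V + a)"
    by (simp add: oracle_dens_def barron_dens_def V_def)
  moreover have "h \<le> V"
    using P v_partition_cell(1)[OF P] by (auto simp: v_partition_def V_def)
  ultimately show ?thesis
    using mixture_ratio_deviation[OF a h _ emp_measure_nonneg] by simp
qed

lemma powr_le_mult_square_if_inverse_le_powr:
  fixes n b :: real
  assumes n: "0 < n" and b: "0 < b" and le: "1 / b \<le> n powr \<tau>"
  shows "n powr (1 - 2 * \<tau>) \<le> n * b\<^sup>2"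
proof -
  have "1 \<le> n powr \<tau> * b" using le b by (simp add: field_simps)
  then have "1 \<le> (n powr \<tau> * b)\<^sup>2" by simp
  also have "\<dots> = n powr (2 * \<tau>) * b\<^sup>2"
    using n by (simp add: power_mult_distrib powr_add[symmetric] power2_eq_square)
  finally have "n powr (1 - 2 * \<tau>) * 1 \<le> n powr (1 - 2 * \<tau>) * (n powr (2 * \<tau>) * b\<^sup>2)"
    by (intro mult_left_mono) auto
  also have "\<dots> = n * b\<^sup>2" using n by (simp add: powr_add[symmetric] mult.assoc[symmetric])
  finally show ?thesis by simp
qed

lemma summable_hoeffding_union_bound:
  fixes b c :: "nat \<Rightarrow> real"
  assumes \<tau>: "0 < \<tau>" "\<tau> < 1/2" and \<epsilon>: "0 < \<epsilon>"
    and rate: "eventually (\<lambda>n. 1 / b n \<le> real n powr \<tau>) sequentially"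
    and b: "\<And>n. 0 < b n" and c: "\<And>n. 0 \<le> c n" "\<And>n. c n \<le> 1 / b n"
  shows "summable (\<lambda>n. c n * (2 * exp (-2 * real n * (\<epsilon> * b n)\<^sup>2)))"
proof (rule summable_comparison_test_ev)
  let ?g = "\<lambda>n::nat. real n powr \<tau> * (2 * exp (-2 * \<epsilon>\<^sup>2 * real n powr (1 - 2 * \<tau>)))"
  have "?g \<in> O(\<lambda>n. inverse (real n ^ 2))" using \<tau> \<epsilon> by real_asymp
  then show "summable ?g"
    by (rule summable_comparison_test_bigo[rotated]) (simp add: inverse_power_summable)
  show "eventually (\<lambda>n. norm (c n * (2 * exp (-2 * real n * (\<epsilon> * b n)\<^sup>2))) \<le> ?g n) sequentially"
    using rate eventually_gt_at_top[of 0]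
  proof eventually_elim
    case (elim n)
    have "\<epsilon>\<^sup>2 * real n powr (1 - 2 * \<tau>) \<le> \<epsilon>\<^sup>2 * (real n * (b n)\<^sup>2)"
      using powr_le_mult_square_if_inverse_le_powr[of "real n" "b n" \<tau>] elim b[of n]
      by (intro mult_left_mono) auto
    then have "exp (-2 * real n * (\<epsilon> * b n)\<^sup>2) \<le> exp (-2 * \<epsilon>\<^sup>2 * real n powr (1 - 2 * \<tau>))"
      by (simp add: power_mult_distrib mult_ac)
    moreover have "c n \<le> real n powr \<tau>" using c[of n] elim by linarith
    ultimately show ?case using c[of n] by (simp add: abs_mult mult_mono)
  qed
qed

lemma (in prob_space) distr_snth: "distr (stream_space M) M (\<lambda>\<omega>. \<omega> !! i) = M"
proof -
  have "distr (stream_space M) M (\<lambda>\<omega>. \<omega> !! i)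
      = distr (distr (\<Pi>\<^sub>M i\<in>UNIV. M) (stream_space M) to_stream) M (\<lambda>\<omega>. \<omega> !! i)"
    by (subst stream_space_eq_distr) simp
  also have "\<dots> = distr (\<Pi>\<^sub>M i\<in>UNIV. M) M (\<lambda>f. f i)"
    by (subst distr_distr) (auto simp: comp_def to_stream_def)
  also have "\<dots> = M"
    by (rule distr_PiM_component) (auto intro: prob_space_axioms)
  finally show ?thesis .
qed

lemma (in prob_space) distr_restrict_snth:
  assumes J: "finite J"
  shows "distr (stream_space M) (\<Pi>\<^sub>M i\<in>J. M) (\<lambda>\<omega>. \<lambda>i\<in>J. \<omega> !! i) = (\<Pi>\<^sub>M i\<in>J. M)"
proof -
  interpret P: product_prob_space "\<lambda>_. M" UNIV ..
  have "distr (stream_space M) (\<Pi>\<^sub>M i\<in>J. M) (\<lambda>\<omega>. \<lambda>i\<in>J. \<omega> !! i)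
      = distr (distr (\<Pi>\<^sub>M i\<in>UNIV. M) (stream_space M) to_stream) (\<Pi>\<^sub>M i\<in>J. M) (\<lambda>\<omega>. \<lambda>i\<in>J. \<omega> !! i)"
    by (subst stream_space_eq_distr) simp
  also have "\<dots> = distr (\<Pi>\<^sub>M i\<in>UNIV. M) (\<Pi>\<^sub>M i\<in>J. M) (\<lambda>f. \<lambda>i\<in>J. to_stream f !! i)"
    by (subst distr_distr) (auto simp: comp_def intro!: measurable_restrict)
  also have "\<dots> = distr (\<Pi>\<^sub>M i\<in>UNIV. M) (\<Pi>\<^sub>M i\<in>J. M) (\<lambda>f. restrict f J)"
    by (simp add: to_stream_def)
  also have "\<dots> = (\<Pi>\<^sub>M i\<in>J. M)"
  proof (rule P.PiM_eqI[OF J])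
    fix A assume A: "\<And>i. i \<in> J \<Longrightarrow> A i \<in> sets M"
    have "emeasure (distr (\<Pi>\<^sub>M i\<in>UNIV. M) (\<Pi>\<^sub>M i\<in>J. M) (\<lambda>f. restrict f J)) (Pi\<^sub>E J A)
        = emeasure (\<Pi>\<^sub>M i\<in>UNIV. M) (prod_emb UNIV (\<lambda>_. M) J (Pi\<^sub>E J A))"
      using A by (subst emeasure_distr) (auto intro!: measurable_restrict sets_PiM_I_finite J
          simp: prod_emb_def space_PiM)
    also have "\<dots> = (\<Prod>i\<in>J. emeasure M (A i))"
      using A J by (intro emeasure_PiM_emb) (auto intro: prob_space_axioms)
    finally show "emeasure (distr (\<Pi>\<^sub>M i\<in>UNIV. M) (\<Pi>\<^sub>M i\<in>J. M) (\<lambda>f. restrict f J)) (Pi\<^sub>E J A)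
        = (\<Prod>i\<in>J. emeasure M (A i))" .
  qed simp
  finally show ?thesis .
qed

lemma (in prob_space) indep_vars_snth:
  assumes "finite J" "J \<noteq> {}"
  shows "prob_space.indep_vars (stream_space M) (\<lambda>_. M) (\<lambda>i \<omega>. \<omega> !! i) J"
proof -
  interpret S: prob_space "stream_space M" by (rule prob_space_stream_space)
  show ?thesis
    by (subst S.indep_vars_iff_distr_eq_PiM)
       (use assms in \<open>simp_all add: distr_snth distr_restrict_snth\<close>)
qed

lemma (in prob_space) emp_measure_deviation_bound:
  assumes n: "0 < n" and A[measurable]: "A \<in> sets M" and t: "0 \<le> t"
  shows "measure (stream_space M) {\<omega>\<in>space (stream_space M). t \<le> \<bar>emp_measure n \<omega> A - prob A\<bar>}
           \<le> 2 * exp (-2 * real n * t\<^sup>2)"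
proof -
  interpret S: prob_space "stream_space M" by (rule prob_space_stream_space)
  have ind: "S.indep_vars (\<lambda>_. borel) (\<lambda>k \<omega>. indicator A (\<omega> !! k) :: real) {..<n}"
    using S.indep_vars_compose2[OF indep_vars_snth[of "{..<n}"],
        of "\<lambda>_ x. indicator A x :: real" "\<lambda>_. borel"] n
    by auto
  have mean: "S.expectation (\<lambda>\<omega>. indicator A (\<omega> !! k) :: real) = prob A" for k
  proof -
    have "S.expectation (\<lambda>\<omega>. indicator A (\<omega> !! k) :: real)
        = integral\<^sup>L (distr (stream_space M) M (\<lambda>\<omega>. \<omega> !! k)) (indicator A)"
      by (subst integral_distr) auto
    then show ?thesis by (simp add: distr_snth)
  qed
  interpret H: Hoeffding_ineq "stream_space M" "{..<n}" "\<lambda>k \<omega>. indicator A (\<omega> !! k) :: real"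
     "\<lambda>_. 0" "\<lambda>_. 1" "real n * prob A"
    by unfold_locales (auto simp: ind mean)
  have "{\<omega>\<in>space (stream_space M). t \<le> \<bar>emp_measure n \<omega> A - prob A\<bar>}
      = {\<omega>\<in>space (stream_space M). real n * t \<le> \<bar>(\<Sum>k<n. indicator A (\<omega> !! k)) - real n * prob A\<bar>}"
  proof -
    have "\<bar>(\<Sum>k<n. indicator A (\<omega> !! k)) - real n * prob A\<bar> = real n * \<bar>emp_measure n \<omega> A - prob A\<bar>"
      for \<omega>
      using n by (simp add: emp_measure_def field_simps flip: abs_of_pos abs_mult)
    then show ?thesis using n by auto
  qed
  then show ?thesis
    using H.Hoeffding_ineq_abs_ge[of "real n * t"] n t by (simp add: power_mult_distrib power2_eq_square mult_ac)
qed

lemma (in prob_space) AE_eventually_emp_measure_close: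
  fixes P :: "nat \<Rightarrow> 'a set set" and b :: "nat \<Rightarrow> real"
  assumes P: "\<And>n. finite (P n)" "\<And>n. P n \<subseteq> sets M" "\<And>n. real (card (P n)) \<le> 1 / b n"
    and \<tau>: "0 < \<tau>" "\<tau> < 1/2" and rate: "eventually (\<lambda>n. 1 / b n \<le> real n powr \<tau>) sequentially"
    and b: "\<And>n. 0 < b n" and \<epsilon>: "0 < \<epsilon>"
  shows "AE \<omega> in stream_space M.
           eventually (\<lambda>n. \<forall>A\<in>P n. \<bar>emp_measure n \<omega> A - prob A\<bar> < \<epsilon> * b n) sequentially"
proof -
  let ?S = "stream_space M"
  interpret S: prob_space ?S by (rule prob_space_stream_space)
  define bad where "bad n = (\<Union>A\<in>P n. {\<omega>\<in>space ?S. \<epsilon> * b n \<le> \<bar>emp_measure n \<omega> A - prob A\<bar>})" for n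
  have bad_sets: "bad n \<in> sets ?S" for n
    unfolding bad_def emp_measure_def using P(1,2)[of n] by (intro sets.finite_UN) auto
  have bound: "measure ?S (bad n) \<le> real (card (P n)) * (2 * exp (-2 * real n * (\<epsilon> * b n)\<^sup>2))"
    if n: "0 < n" for n
  proof -
    have "measure ?S (bad n)
        \<le> (\<Sum>A\<in>P n. measure ?S {\<omega>\<in>space ?S. \<epsilon> * b n \<le> \<bar>emp_measure n \<omega> A - prob A\<bar>})"
      unfolding bad_def emp_measure_def using P(1,2)[of n]
      by (intro S.finite_measure_subadditive_finite) auto
    also have "\<dots> \<le> (\<Sum>A\<in>P n. 2 * exp (-2 * real n * (\<epsilon> * b n)\<^sup>2))"
      using P(2)[of n] \<epsilon> b[of n] n
      by (intro sum_mono emp_measure_deviation_bound) auto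
    finally show ?thesis by simp
  qed
  have "summable (\<lambda>n. measure ?S (bad n))"
  proof (rule summable_comparison_test_ev)
    show "summable (\<lambda>n. real (card (P n)) * (2 * exp (-2 * real n * (\<epsilon> * b n)\<^sup>2)))"
      using summable_hoeffding_union_bound[OF \<tau> \<epsilon> rate b _ P(3)] by simp
    show "eventually (\<lambda>n. norm (measure ?S (bad n))
            \<le> real (card (P n)) * (2 * exp (-2 * real n * (\<epsilon> * b n)\<^sup>2))) sequentially"
      using eventually_gt_at_top[of 0] by (rule eventually_mono) (metis bound measure_nonneg real_norm_def abs_of_nonneg)
  qed
  then have "AE \<omega> in ?S. eventually (\<lambda>n. \<omega> \<in> space ?S - bad n) sequentially"
    using bad_sets by (intro borel_cantelli_AE1) (auto simp: S.emeasure_eq_measure)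
  then show ?thesis
    by (rule AE_mp) (auto simp: bad_def not_le elim!: eventually_mono)
qed

lemma (in prob_space) AE_emp_measure_uniformly_close:
  fixes P :: "nat \<Rightarrow> 'a set set" and b :: "nat \<Rightarrow> real"
  assumes P: "\<And>n. finite (P n)" "\<And>n. P n \<subseteq> sets M" "\<And>n. real (card (P n)) \<le> 1 / b n"
    and \<tau>: "0 < \<tau>" "\<tau> < 1/2" and rate: "eventually (\<lambda>n. 1 / b n \<le> real n powr \<tau>) sequentially"
    and b: "\<And>n. 0 < b n"
  shows "AE \<omega> in stream_space M. \<forall>\<epsilon>>0.
           eventually (\<lambda>n. \<forall>A\<in>P n. \<bar>emp_measure n \<omega> A - prob A\<bar> < \<epsilon> * b n) sequentially"
proof -
  have "AE \<omega> in stream_space M. \<forall>m. eventually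
          (\<lambda>n. \<forall>A\<in>P n. \<bar>emp_measure n \<omega> A - prob A\<bar> < 1 / real (Suc m) * b n) sequentially"
    by (subst AE_all_countable, intro allI AE_eventually_emp_measure_close[OF P \<tau> rate b]) simp
  then show ?thesis
  proof (rule AE_mp, intro AE_I2 impI allI)
    fix \<omega> and \<epsilon> :: real
    assume close: "\<forall>m. eventually
          (\<lambda>n. \<forall>A\<in>P n. \<bar>emp_measure n \<omega> A - prob A\<bar> < 1 / real (Suc m) * b n) sequentially"
      and "0 < \<epsilon>"
    then obtain m where m: "1 / real (Suc m) < \<epsilon>" by (metis nat_approx_posE)
    show "eventually (\<lambda>n. \<forall>A\<in>P n. \<bar>emp_measure n \<omega> A - prob A\<bar> < \<epsilon> * b n) sequentially"
      using close[rule_format, of m]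
    proof (rule eventually_mono, intro ballI)
      fix n A
      assume "\<forall>A\<in>P n. \<bar>emp_measure n \<omega> A - prob A\<bar> < 1 / real (Suc m) * b n" "A \<in> P n"
      then have "\<bar>emp_measure n \<omega> A - prob A\<bar> < 1 / real (Suc m) * b n" by blast
      also have "\<dots> < \<epsilon> * b n" using m b[of n] by (rule mult_strict_right_mono)
      finally show "\<bar>emp_measure n \<omega> A - prob A\<bar> < \<epsilon> * b n" .
    qed
  qed
qed

lemma LIMSEQ_ereal_zero_if_eventually_le:
  fixes F :: "nat \<Rightarrow> ereal"
  assumes nonneg: "\<And>n. 0 \<le> F n"
    and le: "\<And>\<epsilon>. 0 < \<epsilon> \<Longrightarrow> eventually (\<lambda>n. F n \<le> ereal \<epsilon>) sequentially"
  shows "F \<longlonglongrightarrow> 0"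
proof (rule order_tendstoI)
  fix y :: ereal assume "y < 0"
  then show "eventually (\<lambda>n. y < F n) sequentially"
    by (intro always_eventually allI less_le_trans[OF _ nonneg])
next
  fix y :: ereal assume "0 < y"
  then obtain \<epsilon> where "0 < ereal \<epsilon>" "ereal \<epsilon> < y" using ereal_dense2 by blast
  then show "eventually (\<lambda>n. F n < y) sequentially"
    using le[of \<epsilon>] by (auto elim!: eventually_mono)
qed

lemma SUP_oracle_barron_ratio_deviation_le:
  assumes P: "v_partition v h P" and h: "0 < h" and a: "0 < a" "a < 1"
    and cells: "\<forall>A\<in>P. \<bar>emp_measure n \<omega> A - measure_pmf.prob \<mu> A\<bar> < \<epsilon> * (a * h)"
  shows "(SUP x\<in>set_pmf v. ereal \<bar>oracle_dens v \<mu> a P x / barron_dens v a P n \<omega> x - 1\<bar>)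
           \<le> ereal \<epsilon>"
proof (rule SUP_least)
  fix x assume x: "x \<in> set_pmf v"
  have "\<bar>oracle_dens v \<mu> a P x / barron_dens v a P n \<omega> x - 1\<bar>
      \<le> \<bar>measure_pmf.prob \<mu> (cell P x) - emp_measure n \<omega> (cell P x)\<bar> / (a * h)"
    by (rule oracle_barron_ratio_deviation[OF P h a x])
  also have "\<dots> \<le> \<epsilon>"
    using cells v_partition_cell(1)[OF P, of x] a h
    by (auto simp: pos_divide_le_eq abs_minus_commute less_imp_le)
  finally show "ereal \<bar>oracle_dens v \<mu> a P x / barron_dens v a P n \<omega> x - 1\<bar> \<le> ereal \<epsilon>"
    by simp
qed

theorem mainTheorem5:
  fixes v \<mu> :: "'a::countable pmf" and a h :: "nat \<Rightarrow> real" and \<pi> :: "nat \<Rightarrow> 'a set set"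
  assumes X_inf: "infinite (UNIV :: 'a set)"
    and v_inf: "infinite (set_pmf v)"
    and abs_cont: "set_pmf \<mu> \<subseteq> set_pmf v"
    and a_range: "\<And>n. 0 < a n \<and> a n < 1"
    and h_range: "\<And>n. 0 < h n \<and> h n < 1"
    and a_lim: "a \<longlonglongrightarrow> 0"
    and h_lim: "h \<longlonglongrightarrow> 0"
    and rate: "\<exists>\<tau>::real. 0 < \<tau> \<and> \<tau> < 1/2 \<and>
                 (\<lambda>n. 1 / (a n * h n)) \<in> o(\<lambda>n. real n powr \<tau>)"
    and part: "\<And>n. max_v_partition v (h n) (\<pi> n)"
  shows "AE \<omega> in stream_space (measure_pmf \<mu>).
           (\<lambda>n. SUP x\<in>set_pmf v. ereal \<bar>oracle_dens v \<mu> (a n) (\<pi> n) x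
                                      / barron_dens v (a n) (\<pi> n) n \<omega> x - 1\<bar>)
           \<longlonglongrightarrow> 0"
proof -
  obtain \<tau> :: real where \<tau>: "0 < \<tau>" "\<tau> < 1/2"
    and small: "(\<lambda>n. 1 / (a n * h n)) \<in> o(\<lambda>n. real n powr \<tau>)"
    using rate by blast
  have ah: "0 < a n * h n" for n using a_range[of n] h_range[of n] by simp
  have rate_ev: "eventually (\<lambda>n. 1 / (a n * h n) \<le> real n powr \<tau>) sequentially"
    using landau_o.smallD[OF small zero_less_one] by (rule eventually_mono) (simp add: ah abs_of_pos)
  have vp: "v_partition v (h n) (\<pi> n)" for n using part by (simp add: max_v_partition_def)
  have card: "real (card (\<pi> n)) \<le> 1 / (a n * h n)" for n
  proof -
    have "real (card (\<pi> n)) \<le> 1 / h n"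
      using v_partition_card_le[OF vp] h_range[of n] by (simp add: pos_le_divide_eq)
    also have "\<dots> \<le> 1 / (a n * h n)"
      using a_range[of n] h_range[of n] ah[of n] by (intro divide_left_mono) auto
    finally show ?thesis .
  qed
  have "AE \<omega> in stream_space (measure_pmf \<mu>). \<forall>\<epsilon>>0. eventually (\<lambda>n. \<forall>A\<in>\<pi> n.
          \<bar>emp_measure n \<omega> A - measure_pmf.prob \<mu> A\<bar> < \<epsilon> * (a n * h n)) sequentially"
    using vp card \<tau> rate_ev ah
    by (intro measure_pmf.AE_emp_measure_uniformly_close) (auto simp: v_partition_def)
  then show ?thesis
  proof (rule AE_mp, intro AE_I2 impI LIMSEQ_ereal_zero_if_eventually_le)
    fix \<omega> n
    obtain x0 where "x0 \<in> set_pmf v" using set_pmf_not_empty[of v] by blast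
    then show "0 \<le> (SUP x\<in>set_pmf v. ereal \<bar>oracle_dens v \<mu> (a n) (\<pi> n) x
                                      / barron_dens v (a n) (\<pi> n) n \<omega> x - 1\<bar>)"
      by (rule SUP_upper2) simp
  next
    fix \<omega> and \<epsilon> :: real
    assume close: "\<forall>\<epsilon>>0. eventually (\<lambda>n. \<forall>A\<in>\<pi> n.
          \<bar>emp_measure n \<omega> A - measure_pmf.prob \<mu> A\<bar> < \<epsilon> * (a n * h n)) sequentially"
      and "0 < \<epsilon>"
    show "eventually (\<lambda>n. (SUP x\<in>set_pmf v. ereal \<bar>oracle_dens v \<mu> (a n) (\<pi> n) x
                                      / barron_dens v (a n) (\<pi> n) n \<omega> x - 1\<bar>) \<le> ereal \<epsilon>) sequentially"
      using close[rule_format, OF \<open>0 < \<epsilon>\<close>]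
      by (rule eventually_mono) (use vp a_range h_range in \<open>blast intro: SUP_oracle_barron_ratio_deviation_le\<close>)
  qed
qed

end
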